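(* Let $0<r_1<r_2$, $N\ge 2$, and let $h:[r_1,r_2]\times[0,\infty)\to[0,\infty)$ be continuous with $h(t,0)=0$. Let $q$ and $f$ be defined from $h$ as in the context, and consider, for $\lambda>0$, the boundary value problem $$u''(t)+\lambda q(t)f(t,u(t))=0,\quad t\in(0,1),\qquad u(0)=0=u(1). \qquad (P_\lambda)$$ Assume that $\lim_{u\to0^+}\frac{f(t,u)}{u}=\infty$ uniformly in $t\in(0,1)$. Then for each $R>0$ there exists a constant $\lambda_R>0$ such that for every $\lambda<\lambda_R$ (with $\lambda>0$), problem $(P_\lambda)$ has a positive solution $u$ with $\sup_{t\in[0,1]}u(t)\le R$.
   Context: The problem $(P_\lambda)$ arises from radial solutions of $-\Delta v=\lambda h(|x|,v)$ in the annulus $\{x\in\mathbb{R}^N: r_1<|x|<r_2\}$, $v=0$ on the boundary. The functions $q$ and $f$ are defined as follows. If $N=2$: $q(t)=\left[r_2\left(\frac{r_1}{r_2}\right)^t\log\frac{r_2}{r_1}\right]^2$ and $f(t,u)=h\!\left(r_2\left(\frac{r_1}{r_2}\right)^t,u\right)$. If $N\ge 3$: with $A=\frac{(r_1r_2)^{N-2}}{r_2^{N-2}-r_1^{N-2}}$ and $B=\frac{r_2^{N-2}}{r_2^{N-2}-r_1^{N-2}}$, $q(t)=(N-2)^{-2}\frac{A^{2/(N-2)}}{(B-t)^{2(N-1)/(N-2)}}$ and $f(t,u)=h\!\left(\left(\frac{A}{B-t}\right)^{1/(N-2)},u\right)$. In either case $q$ is continuous on $[0,1]$ and bounded between positive constants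 there. A positive solution of $(P_\lambda)$ is a function $u\in C([0,1])\cap C^2(0,1)$ satisfying $(P_\lambda)$ with $u(t)>0$ for $t\in(0,1)$. *)

theory Defs
  imports "HOL-Analysis.Analysis"
begin

text \<open>The weight q and nonlinearity f of the ODE obtained from radial solutions
  of -Delta v = lambda h(|x|,v) in the annulus r1 < |x| < r2 of R^N.\<close>

definition qfun :: "nat \<Rightarrow> real \<Rightarrow> real \<Rightarrow> real \<Rightarrow> real" where
  "qfun N r1 r2 t =
     (if N = 2 then (r2 * (r1 / r2) powr t * ln (r2 / r1))\<^sup>2
      else (let A = (r1 * r2) ^ (N - 2) / (r2 ^ (N - 2) - r1 ^ (N - 2));
                B = r2 ^ (N - 2) / (r2 ^ (N - 2) - r1 ^ (N - 2))
            in (1 / (real N - 2)\<^sup>2) * A powr (2 / (real N - 2))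
               / (B - t) powr (2 * (real N - 1) / (real N - 2))))"

definition ffun :: "nat \<Rightarrow> real \<Rightarrow> real \<Rightarrow> (real \<Rightarrow> real \<Rightarrow> real) \<Rightarrow> real \<Rightarrow> real \<Rightarrow> real" where
  "ffun N r1 r2 h t u =
     (if N = 2 then h (r2 * (r1 / r2) powr t) u
      else (let A = (r1 * r2) ^ (N - 2) / (r2 ^ (N - 2) - r1 ^ (N - 2));
                B = r2 ^ (N - 2) / (r2 ^ (N - 2) - r1 ^ (N - 2))
            in h ((A / (B - t)) powr (1 / (real N - 2))) u))"

definition positive_solution ::
  "nat \<Rightarrow> real \<Rightarrow> real \<Rightarrow> (real \<Rightarrow> real \<Rightarrow> real) \<Rightarrow> real \<Rightarrow> (real \<Rightarrow> real) \<Rightarrow> bool" where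
  "positive_solution N r1 r2 h lam u \<longleftrightarrow>
     continuous_on {0..1} u \<and>
     (\<exists>u' u''. (\<forall>t\<in>{0<..<1}. (u has_real_derivative u' t) (at t)) \<and>
               (\<forall>t\<in>{0<..<1}. (u' has_real_derivative u'' t) (at t)) \<and>
               continuous_on {0<..<1} u'' \<and>
               (\<forall>t\<in>{0<..<1}. u'' t + lam * qfun N r1 r2 t * ffun N r1 r2 h t (u t) = 0)) \<and>
     u 0 = 0 \<and> u 1 = 0 \<and>
     (\<forall>t\<in>{0<..<1}. u t > 0)"

end

theory Submission
  imports Defs "HOL-Complex_Analysis.Great_Picard"
begin

text \<open>Truncating \<open>q(t) f(t, u)\<close> at the level \<open>u = R\<close> gives a bounded, uniformly continuous
  nonlinearity \<open>K\<close>. Solutions of \<open>u'' + lam K(t, u) = 0\<close>, \<open>u(0) = 0\<close>, \<open>u'(0) = a\<close> are the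
  fixed points of \<open>u(t) = a t - lam \<integral>\<^sub>0\<^sup>t (t - s) K(s, u(s)) ds\<close>; they are concave and
  bounded by \<open>a t\<close>. We shoot on the slope \<open>a\<close>: for \<open>a = R\<close> the endpoint value \<open>u(1)\<close> is
  at least \<open>R - lam sup K > 0\<close> when \<open>lam\<close> is small, while for small \<open>a\<close> the superlinearity of
  \<open>f\<close> at \<open>0\<close> makes the concave profile bend down too fast, so \<open>u(1) < 0\<close>. As \<open>K\<close> is only
  continuous, solutions need not depend continuously on \<open>a\<close>; so we shoot for the equations
  with a small delay in the nonlinearity, which are solved by steps and do depend continuously
  on \<open>a\<close>, and let the delay tend to \<open>0\<close> using Arzela-Ascoli. The limit is concave, vanishes at
  \<open>0\<close> and \<open>1\<close> and has positive initial slope, hence lies in \<open>(0, R]\<close> on \<open>(0, 1)\<close>, where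
  \<open>K\<close> agrees with \<open>q f\<close>.\<close>

section \<open>The Volterra operator\<close>

definition volterra :: "(real \<Rightarrow> real) \<Rightarrow> real \<Rightarrow> real" where
  "volterra g t = integral {0..t} (\<lambda>s. (t - s) * g s)"

lemma volterra_0 [simp]: "volterra g 0 = 0"
  by (simp add: volterra_def)

lemma volterra_cong:
  assumes "\<And>s. s \<in> {0..t} \<Longrightarrow> f s = g s"
  shows "volterra f t = volterra g t"
  unfolding volterra_def using assms by (intro integral_cong) auto

lemma integrable_volterra_kernel:
  fixes g :: "real \<Rightarrow> real"
  assumes "continuous_on {0..1} g" "t \<in> {0..1}"
  shows "(\<lambda>s. (t - s) * g s) integrable_on {0..t}"
proof -
  have "continuous_on {0..t} g"
    using assms by (auto intro: continuous_on_subset)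
  then show ?thesis
    by (intro integrable_continuous_interval continuous_intros)
qed

lemma volterra_eq_integrals:
  assumes g: "continuous_on {0..1} g" and t: "t \<in> {0..1}"
  shows "volterra g t = t * integral {0..t} g - integral {0..t} (\<lambda>s. s * g s)"
proof -
  have g_t: "continuous_on {0..t} g"
    using g t by (auto intro: continuous_on_subset)
  have "volterra g t = integral {0..t} (\<lambda>s. t * g s - s * g s)"
    unfolding volterra_def by (simp add: algebra_simps)
  also have "\<dots> = integral {0..t} (\<lambda>s. t * g s) - integral {0..t} (\<lambda>s. s * g s)"
    using g_t by (intro integral_diff integrable_continuous_interval continuous_intros)
  finally show ?thesis by simp
qed

lemma volterra_has_real_derivative:
  assumes g: "continuous_on {0..1} g" and t: "t \<in> {0..1}"
  shows "(volterra g has_real_derivative integral {0..t} g) (at t within {0..1})"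
proof -
  have "continuous_on {0..1} (\<lambda>s. s * g s)"
    using g by (intro continuous_intros)
  from DERIV_diff[OF DERIV_mult[OF DERIV_ident integral_has_real_derivative[OF g t]]
                     integral_has_real_derivative[OF this t]]
  have "((\<lambda>x. x * integral {0..x} g - integral {0..x} (\<lambda>s. s * g s)) has_real_derivative
      integral {0..t} g) (at t within {0..1})"
    by simp
  then show ?thesis
    by (rule has_field_derivative_transform_within[OF _ zero_less_one t])
      (use volterra_eq_integrals[OF g] in auto)
qed

lemma continuous_on_volterra:
  assumes "continuous_on {0..1} g"
  shows "continuous_on {0..1} (volterra g)"
  using volterra_has_real_derivative[OF assms] DERIV_continuous
  unfolding continuous_on_eq_continuous_within by blast

lemma volterra_nonneg:
  assumes "continuous_on {0..1} g" "t \<in> {0..1}" "\<And>s. s \<in> {0..1} \<Longrightarrow> 0 \<le> g s"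
  shows "0 \<le> volterra g t"
  unfolding volterra_def
  using assms integrable_volterra_kernel[OF assms(1,2)] by (intro integral_nonneg) auto

lemma volterra_diff:
  assumes "continuous_on {0..1} f" "continuous_on {0..1} g" "t \<in> {0..1}"
  shows "volterra f t - volterra g t = volterra (\<lambda>s. f s - g s) t"
  unfolding volterra_def
  using integral_diff[OF integrable_volterra_kernel[OF assms(1,3)] integrable_volterra_kernel[OF assms(2,3)]]
  by (simp add: algebra_simps)

lemma abs_volterra_le:
  assumes g: "continuous_on {0..1} g" and t: "t \<in> {0..1}"
    and bound: "\<And>s. s \<in> {0..1} \<Longrightarrow> \<bar>g s\<bar> \<le> B"
  shows "\<bar>volterra g t\<bar> \<le> B * t\<^sup>2"
proof -
  have "\<bar>volterra g t\<bar> \<le> integral {0..t} (\<lambda>s. t * B)"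
    unfolding volterra_def
  proof (rule integral_norm_bound_integral[where f = "\<lambda>s. (t - s) * g s", simplified])
    show "(\<lambda>s. (t - s) * g s) integrable_on {0..t}"
      by (rule integrable_volterra_kernel[OF g t])
    fix s assume s: "s \<in> {0..t}"
    then have "\<bar>g s\<bar> \<le> B" using t bound by auto
    then show "\<bar>(t - s) * g s\<bar> \<le> t * B"
      using s by (auto simp: abs_mult intro: mult_mono)
  qed auto
  then show ?thesis using t by (simp add: power2_eq_square algebra_simps)
qed

lemma uniform_limit_volterra:
  assumes lim: "uniform_limit {0..1} G g F"
    and cont: "\<forall>\<^sub>F n in F. continuous_on {0..1} (G n)" and g: "continuous_on {0..1} g"
  shows "uniform_limit {0..1} (\<lambda>n. volterra (G n)) (volterra g) F"
proof (rule uniform_limitI)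
  fix e :: real assume "0 < e"
  then have "0 < e / 2" by simp
  from uniform_limitD[OF lim this]
  have "\<forall>\<^sub>F n in F. \<forall>s\<in>{0..1}. dist (G n s) (g s) < e / 2" .
  with cont show "\<forall>\<^sub>F n in F. \<forall>t\<in>{0..1}. dist (volterra (G n) t) (volterra g t) < e"
  proof eventually_elim
    case (elim n)
    show ?case
    proof
      fix t :: real assume t: "t \<in> {0..1}"
      have "\<bar>volterra (\<lambda>s. G n s - g s) t\<bar> \<le> e / 2 * t\<^sup>2"
        using elim t g
        by (intro abs_volterra_le continuous_intros less_imp_le) (auto simp: dist_real_def)
      also have "\<dots> \<le> e / 2"
        using \<open>0 < e\<close> t by (simp add: power_le_one mult_left_le)
      also have "\<dots> < e"
        using \<open>0 < e\<close> by simp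
      finally show "dist (volterra (G n) t) (volterra g t) < e"
        using volterra_diff[OF elim(1) g t] by (simp add: dist_real_def)
    qed
  qed
qed

section \<open>Concave profiles\<close>

lemma antimono_derivative_secant_bounds:
  fixes u v :: "real \<Rightarrow> real"
  assumes deriv: "\<And>x. x \<in> {a..b} \<Longrightarrow> (u has_real_derivative v x) (at x within {a..b})"
    and antimono: "\<And>x y. x \<in> {a..b} \<Longrightarrow> y \<in> {a..b} \<Longrightarrow> x \<le> y \<Longrightarrow> v y \<le> v x"
    and xy: "a \<le> x" "x < y" "y \<le> b"
  shows "v y * (y - x) \<le> u y - u x" and "u y - u x \<le> v x * (y - x)"
proof -
  have "\<exists>z\<in>{x<..<y}. u y - u x = (\<lambda>h. h * v z) (y - x)"
  proof (rule mvt_simple[OF xy(2)])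
    fix z assume "x \<le> z" "z \<le> y"
    then have "(u has_real_derivative v z) (at z within {x..y})"
      using deriv[of z] xy by (auto intro: DERIV_subset)
    then show "(u has_derivative (\<lambda>h. h * v z)) (at z within {x..y})"
      by (simp add: has_field_derivative_def mult.commute[of _ "v z"])
  qed
  then obtain z where z: "x < z" "z < y" "u y - u x = (y - x) * v z"
    by auto
  have "v y \<le> v z" "v z \<le> v x"
    using antimono z xy by auto
  then show "v y * (y - x) \<le> u y - u x" "u y - u x \<le> v x * (y - x)"
    using z xy by (auto simp: mult.commute intro: mult_left_mono)
qed

locale volterra_profile =
  fixes g u :: "real \<Rightarrow> real" and a lam B :: real
  assumes source_continuous: "continuous_on {0..1} g"
    and source_nonneg: "\<And>s. s \<in> {0..1} \<Longrightarrow> 0 \<le> g s"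
    and source_le: "\<And>s. s \<in> {0..1} \<Longrightarrow> g s \<le> B"
    and lam_nonneg: "0 \<le> lam"
    and profile_eq: "\<And>t. t \<in> {0..1} \<Longrightarrow> u t = a * t - lam * volterra g t"
begin

definition slope :: "real \<Rightarrow> real" where
  "slope x = a - lam * integral {0..x} g"

lemma profile_has_derivative:
  assumes "x \<in> {0..1}"
  shows "(u has_real_derivative slope x) (at x within {0..1})"
proof -
  have "((\<lambda>t. a * t - lam * volterra g t) has_real_derivative a * 1 - lam * integral {0..x} g)
      (at x within {0..1})"
    by (intro DERIV_diff DERIV_cmult DERIV_ident volterra_has_real_derivative source_continuous assms)
  then have "((\<lambda>t. a * t - lam * volterra g t) has_real_derivative slope x) (at x within {0..1})"
    by (simp add: slope_def)
  then show ?thesis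
    by (rule has_field_derivative_transform_within[OF _ zero_less_one assms]) (auto simp: profile_eq)
qed

lemma slope_has_derivative:
  assumes "x \<in> {0..1}"
  shows "(slope has_real_derivative - lam * g x) (at x within {0..1})"
  unfolding slope_def[abs_def]
  using DERIV_diff[OF DERIV_const DERIV_cmult[OF integral_has_real_derivative[OF source_continuous assms]]]
  by simp

lemma slope_diff:
  assumes "0 \<le> x" "x \<le> y" "y \<le> 1"
  shows "slope x - slope y = lam * integral {x..y} g"
proof -
  have "g integrable_on {0..y}"
    using assms by (intro integrable_continuous_interval continuous_on_subset[OF source_continuous]) auto
  then have "integral {0..y} g = integral {0..x} g + integral {x..y} g"
    using assms by (intro Henstock_Kurzweil_Integration.integral_combine[symmetric]) auto
  then show ?thesis
    unfolding slope_def by (simp add: algebra_simps)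
qed

lemma slope_antimono:
  assumes "x \<in> {0..1}" "y \<in> {0..1}" "x \<le> y"
  shows "slope y \<le> slope x"
proof -
  have "g integrable_on {x..y}"
    using assms by (intro integrable_continuous_interval continuous_on_subset[OF source_continuous]) auto
  then have "0 \<le> lam * integral {x..y} g"
    using assms source_nonneg lam_nonneg by (intro mult_nonneg_nonneg integral_nonneg) auto
  then show ?thesis
    using slope_diff[of x y] assms lam_nonneg by simp
qed

lemmas secant_bounds =
  antimono_derivative_secant_bounds[OF profile_has_derivative slope_antimono]

lemma chord_slopes:
  assumes "0 \<le> x" "x < y" "y < z" "z \<le> 1"
  shows "(u z - u y) * (y - x) \<le> (u y - u x) * (z - y)"
proof -
  have "(u z - u y) * (y - x) \<le> slope y * (z - y) * (y - x)"
    using secant_bounds(2)[of y z] assms by (intro mult_right_mono) auto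
  also have "\<dots> = slope y * (y - x) * (z - y)"
    by simp
  also have "\<dots> \<le> (u y - u x) * (z - y)"
    using secant_bounds(1)[of x y] assms by (intro mult_right_mono) auto
  finally show ?thesis .
qed

lemma profile_0 [simp]: "u 0 = 0"
  using profile_eq[of 0] by simp

lemma profile_le: "t \<in> {0..1} \<Longrightarrow> u t \<le> a * t"
  using profile_eq volterra_nonneg[OF source_continuous _ source_nonneg] lam_nonneg
  by (simp add: mult_nonneg_nonneg)

lemma continuous_on_profile: "continuous_on {0..1} u"
proof -
  have "continuous_on {0..1} (\<lambda>t. a * t - lam * volterra g t)"
    by (intro continuous_intros continuous_on_volterra source_continuous)
  then show ?thesis
    by (rule continuous_on_cong[THEN iffD1, rotated 2]) (auto simp: profile_eq)
qed

lemma abs_slope_le: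
  assumes "x \<in> {0..1}"
  shows "\<bar>slope x\<bar> \<le> \<bar>a\<bar> + lam * B"
proof -
  have "g integrable_on {0..x}"
    using assms by (intro integrable_continuous_interval continuous_on_subset[OF source_continuous]) auto
  then have "integral {0..x} g \<le> integral {0..x} (\<lambda>_. B)" "0 \<le> integral {0..x} g"
    using assms source_le source_nonneg by (intro integral_le integral_nonneg; auto)+
  moreover have "integral {0..x} (\<lambda>_. B) \<le> B"
    using assms source_le[of 0] source_nonneg[of 0] by (simp add: mult_left_le_one_le)
  ultimately have "lam * integral {0..x} g \<le> lam * B" "0 \<le> lam * integral {0..x} g"
    using assms lam_nonneg by (auto intro: mult_left_mono)
  then show ?thesis
    unfolding slope_def by linarith
qed

lemma profile_lipschitz:
  assumes "x \<in> {0..1}" "y \<in> {0..1}"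
  shows "\<bar>u x - u y\<bar> \<le> (\<bar>a\<bar> + lam * B) * \<bar>x - y\<bar>"
  using field_differentiable_bound[OF convex_real_interval(5) profile_has_derivative _ assms]
    abs_slope_le by simp

lemma abs_profile_le:
  assumes "t \<in> {0..1}"
  shows "\<bar>u t\<bar> \<le> \<bar>a\<bar> + lam * B"
proof -
  have "\<bar>u t - u 0\<bar> \<le> (\<bar>a\<bar> + lam * B) * \<bar>t - 0\<bar>"
    using assms by (intro profile_lipschitz) auto
  also have "\<dots> \<le> \<bar>a\<bar> + lam * B"
    using assms abs_slope_le[of 0] by (intro mult_left_le) auto
  finally show ?thesis
    by simp
qed

lemma profile_pos_near_0:
  assumes "0 < a" "0 < e"
  obtains s where "0 < s" "s < e" "0 < u s"
proof -
  obtain d where "0 < d" and d: "\<And>s. 0 < s \<Longrightarrow> s \<in> {0..1} \<Longrightarrow> s < d \<Longrightarrow> u 0 < u s"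
    using has_real_derivative_pos_inc_right[OF profile_has_derivative[of 0]] assms
    by (force simp: slope_def)
  define s where "s = min e (min d 1) / 2"
  have "0 < s" "s < e" "s \<in> {0..1}" "s < d"
    using \<open>0 < d\<close> assms unfolding s_def by auto
  with d[of s] that show ?thesis by simp
qed

lemma profile_pos:
  assumes "0 < a" "0 \<le> u 1" "0 < t" "t < 1"
  shows "0 < u t"
proof -
  obtain s where s: "0 < s" "s < t" "0 < u s"
    using profile_pos_near_0[OF \<open>0 < a\<close> \<open>0 < t\<close>] by blast
  have "(u 1 - u t) * (t - s) \<le> (u t - u s) * (1 - t)"
    using s assms by (intro chord_slopes) auto
  moreover have "- u t * (t - s) \<le> (u 1 - u t) * (t - s)"
    using assms s by (intro mult_right_mono) auto
  ultimately have "u s * (1 - t) \<le> u t * (1 - s)"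
    by (simp add: algebra_simps)
  moreover have "0 < u s * (1 - t)"
    using s assms by simp
  ultimately have "0 < u t * (1 - s)"
    by linarith
  then show ?thesis
    using s assms by (simp add: zero_less_mult_iff)
qed

lemma profile_ge_half_midpoint:
  assumes "0 \<le> u 1" "0 \<le> u (1/2)" "t \<in> {1/4..3/4}"
  shows "u (1/2) / 2 \<le> u t"
proof (cases "t < 1/2")
  case True
  have "(u (1/2) - u t) * (t - 0) \<le> (u t - u 0) * (1/2 - t)"
    using assms True by (intro chord_slopes) auto
  then have "u (1/2) * t \<le> u t / 2"
    by (simp add: algebra_simps)
  moreover have "u (1/2) * (1/4) \<le> u (1/2) * t"
    using assms by (intro mult_left_mono) auto
  ultimately show ?thesis by simp
next
  case False
  show ?thesis
  proof (cases "t = 1/2")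
    case True
    then show ?thesis
      using assms(2) by (simp only: True)
  next
    case False
    with \<open>\<not> t < 1/2\<close> have "(u 1 - u t) * (t - 1/2) \<le> (u t - u (1/2)) * (1 - t)"
      using assms by (intro chord_slopes) auto
    moreover have "- u t * (t - 1/2) \<le> (u 1 - u t) * (t - 1/2)"
      using assms \<open>\<not> t < 1/2\<close> by (intro mult_right_mono) auto
    ultimately have "u (1/2) * (1 - t) \<le> u t / 2"
      by (simp add: algebra_simps)
    moreover have "u (1/2) * (1/4) \<le> u (1/2) * (1 - t)"
      using assms by (intro mult_left_mono) auto
    ultimately show ?thesis by simp
  qed
qed

lemma profile_1_ge: "a - lam * B \<le> u 1"
proof -
  have "\<bar>volterra g 1\<bar> \<le> B * 1\<^sup>2"
    using source_nonneg source_le by (intro abs_volterra_le source_continuous) auto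
  then have "lam * volterra g 1 \<le> lam * B"
    using lam_nonneg by (intro mult_left_mono) auto
  then show ?thesis
    using profile_eq[of 1] by simp
qed

lemma slope_drop_le:
  assumes "0 \<le> u 1"
  shows "slope (1/2) - slope (3/4) \<le> 8 * u (1/2)"
  using secant_bounds(1)[of 0 "1/2"] secant_bounds(2)[of "1/2" "3/4"] secant_bounds(2)[of "3/4" 1] assms
  by simp

lemma source_ge_half_midpoint:
  assumes "0 \<le> u 1" "0 < a" "a < \<delta>" "0 \<le> d" "d \<le> 1/4" "0 \<le> \<mu>" "s \<in> {1/2..3/4}"
    and growth: "0 < u (s - d) \<Longrightarrow> u (s - d) < \<delta> \<Longrightarrow> \<mu> * u (s - d) \<le> g s"
  shows "\<mu> * (u (1/2) / 2) \<le> g s"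
proof -
  have sd: "s - d \<in> {1/4..3/4}"
    using assms by auto
  have "0 < u (1/2)"
    using profile_pos[OF \<open>0 < a\<close> \<open>0 \<le> u 1\<close>] by simp
  with sd have low: "u (1/2) / 2 \<le> u (s - d)"
    using profile_ge_half_midpoint[OF \<open>0 \<le> u 1\<close> _ sd] by simp
  have "u (s - d) \<le> a * (s - d)"
    using profile_le sd by auto
  also have "\<dots> \<le> a"
    using assms sd by (intro mult_left_le) auto
  finally have "\<mu> * u (s - d) \<le> g s"
    using growth low \<open>0 < u (1/2)\<close> \<open>a < \<delta>\<close> by simp
  moreover have "\<mu> * (u (1/2) / 2) \<le> \<mu> * u (s - d)"
    using low \<open>0 \<le> \<mu>\<close> by (rule mult_left_mono)
  ultimately show ?thesis
    by simp
qed

text \<open>If \<open>u 1 \<ge> 0\<close>, the slope drops by at least \<open>lam * \<mu> * u (1/2) / 8\<close> on \<open>[1/2, 3/4]\<close> by the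
  previous lemma, contradicting \<open>slope_drop_le\<close>.\<close>

lemma profile_endpoint_neg:
  assumes "0 < a" "a < \<delta>" "0 \<le> d" "d \<le> 1/4" "64 < lam * \<mu>"
    and growth: "\<And>s. s \<in> {1/2..3/4} \<Longrightarrow> 0 < u (s - d) \<Longrightarrow> u (s - d) < \<delta> \<Longrightarrow>
                    \<mu> * u (s - d) \<le> g s"
  shows "u 1 < 0"
proof (rule ccontr)
  assume "\<not> u 1 < 0"
  then have u1: "0 \<le> u 1" by simp
  define p where "p = u (1/2)"
  have "0 < p"
    unfolding p_def using profile_pos[OF \<open>0 < a\<close> u1] by simp
  have "0 \<le> \<mu>"
  proof (rule ccontr)
    assume "\<not> 0 \<le> \<mu>"
    then have "lam * \<mu> \<le> 0"
      using lam_nonneg by (simp add: mult_nonneg_nonpos)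
    with \<open>64 < lam * \<mu>\<close> show False by simp
  qed
  have "g integrable_on {1/2..3/4}"
    by (intro integrable_continuous_interval continuous_on_subset[OF source_continuous]) auto
  then have "integral {1/2..3/4::real} (\<lambda>_. \<mu> * (p / 2)) \<le> integral {1/2..3/4} g"
    unfolding p_def using source_ge_half_midpoint[OF u1 assms(1-4) \<open>0 \<le> \<mu>\<close> _ growth]
    by (intro integral_le) auto
  then have "lam * (\<mu> * p / 8) \<le> lam * integral {1/2..3/4} g"
    by (intro mult_left_mono lam_nonneg) simp
  also have "\<dots> \<le> 8 * p"
    using slope_diff[of "1/2" "3/4"] slope_drop_le[OF u1] unfolding p_def by simp
  finally have "(lam * \<mu>) * p \<le> 64 * p"
    by simp
  with \<open>64 < lam * \<mu>\<close> \<open>0 < p\<close> show False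
    by simp
qed

lemma positive_solution:
  assumes "0 < a" "u 1 = 0"
    and source_eq: "\<And>t. t \<in> {0<..<1} \<Longrightarrow> g t = qfun N r1 r2 t * ffun N r1 r2 h t (u t)"
  shows "positive_solution N r1 r2 h lam u"
proof -
  have "(u has_real_derivative slope t) (at t)" "(slope has_real_derivative - lam * g t) (at t)"
    if "t \<in> {0<..<1}" for t
  proof -
    have "at t within {0..1} = at t"
      using that by (intro at_within_Icc_at) auto
    then show "(u has_real_derivative slope t) (at t)" "(slope has_real_derivative - lam * g t) (at t)"
      using profile_has_derivative[of t] slope_has_derivative[of t] that by auto
  qed
  moreover have "continuous_on {0<..<1} (\<lambda>t. - lam * g t)"
    by (intro continuous_intros continuous_on_subset[OF source_continuous]) auto
  moreover have "\<forall>t\<in>{0<..<1}. - lam * g t + lam * qfun N r1 r2 t * ffun N r1 r2 h t (u t) = 0"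
    using source_eq by simp
  moreover have "\<forall>t\<in>{0<..<1}. 0 < u t"
    using profile_pos[OF \<open>0 < a\<close>] \<open>u 1 = 0\<close> by simp
  ultimately show ?thesis
    unfolding positive_solution_def using continuous_on_profile \<open>u 1 = 0\<close>
    by (intro conjI exI[of _ slope] exI[of _ "\<lambda>t. - lam * g t"]) auto
qed

end

section \<open>Retarded approximations\<close>

lemma lipschitz_sequence_uniform_limit_subseq:
  fixes F :: "nat \<Rightarrow> real \<Rightarrow> real"
  assumes bounded: "\<And>n x. x \<in> {0..1} \<Longrightarrow> \<bar>F n x\<bar> \<le> M"
    and lipschitz: "\<And>n x y. x \<in> {0..1} \<Longrightarrow> y \<in> {0..1} \<Longrightarrow> \<bar>F n x - F n y\<bar> \<le> L * \<bar>x - y\<bar>"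
  obtains U r where "continuous_on {0..1} U" "strict_mono r"
    "uniform_limit {0..1} (F \<circ> r) U sequentially"
proof -
  have equicontinuous: "\<exists>d>0. \<forall>n y. y \<in> {0..1} \<and> norm (x - y) < d \<longrightarrow> norm (F n x - F n y) < e"
    if "x \<in> {0..1}" "0 < e" for x e :: real
  proof (intro exI[of _ "e / (\<bar>L\<bar> + 1)"] conjI allI impI)
    show "0 < e / (\<bar>L\<bar> + 1)"
      using that by simp
    fix n y assume y: "y \<in> {0..1} \<and> norm (x - y) < e / (\<bar>L\<bar> + 1)"
    have "\<bar>F n x - F n y\<bar> \<le> L * \<bar>x - y\<bar>"
      using lipschitz that y by simp
    also have "\<dots> \<le> (\<bar>L\<bar> + 1) * \<bar>x - y\<bar>"
      by (intro mult_right_mono) auto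
    also have "\<dots> < e"
      using y by (simp add: field_simps add_pos_nonneg)
    finally show "norm (F n x - F n y) < e"
      by simp
  qed
  obtain U r where "continuous_on {0..1} U" "strict_mono (r :: nat \<Rightarrow> nat)"
    and convergent: "\<And>e. 0 < e \<Longrightarrow> \<exists>N. \<forall>n x. N \<le> n \<and> x \<in> {0..1} \<longrightarrow> norm (F (r n) x - U x) < e"
  proof (rule Arzela_Ascoli[of "{0..1::real}" F M])
    show "compact {0..1::real}" "\<And>n x. x \<in> {0..1} \<Longrightarrow> norm (F n x) \<le> M"
      using bounded by auto
    show "\<And>x e. x \<in> {0..1} \<Longrightarrow> 0 < e \<Longrightarrow>
        \<exists>d>0. \<forall>n y. y \<in> {0..1} \<and> norm (x - y) < d \<longrightarrow> norm (F n x - F n y) < e"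
      by (rule equicontinuous)
  qed blast
  moreover have "uniform_limit {0..1} (F \<circ> r) U sequentially"
    unfolding uniform_limit_sequentially_iff dist_norm o_def using convergent by blast
  ultimately show ?thesis
    using that by blast
qed

lemma continuous_on_delayed:
  fixes w :: "real \<Rightarrow> real"
  assumes "continuous_on {0..1} w" "0 \<le> d"
  shows "continuous_on {0..1} (\<lambda>s. w (max 0 (s - d)))"
  by (rule continuous_on_compose2[OF assms(1)]) (use assms(2) in \<open>auto intro!: continuous_intros\<close>)

lemma uniform_limit_delayed:
  fixes F :: "nat \<Rightarrow> real \<Rightarrow> real"
  assumes lipschitz: "\<And>n x y. x \<in> {0..1} \<Longrightarrow> y \<in> {0..1} \<Longrightarrow> \<bar>F n x - F n y\<bar> \<le> L * \<bar>x - y\<bar>"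
    and "0 \<le> L" "\<And>n. 0 \<le> d n" "d \<longlonglongrightarrow> 0" and lim: "uniform_limit {0..1} F U sequentially"
  shows "uniform_limit {0..1} (\<lambda>n s. F n (max 0 (s - d n))) U sequentially"
proof (rule uniform_limitI)
  fix e :: real assume "0 < e"
  then have "\<forall>\<^sub>F n in sequentially. \<forall>s\<in>{0..1}. dist (F n s) (U s) < e / 2"
    using uniform_limitD[OF lim, of "e / 2"] by simp
  moreover have "\<forall>\<^sub>F n in sequentially. L * d n < e / 2"
    using \<open>0 < e\<close> by (intro order_tendstoD(2)) (auto intro: tendsto_mult_right_zero \<open>d \<longlonglongrightarrow> 0\<close>)
  ultimately show "\<forall>\<^sub>F n in sequentially. \<forall>s\<in>{0..1}. dist (F n (max 0 (s - d n))) (U s) < e"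
  proof eventually_elim
    case (elim n)
    show ?case
    proof
      fix s :: real assume s: "s \<in> {0..1}"
      have "\<bar>F n (max 0 (s - d n)) - F n s\<bar> \<le> L * \<bar>max 0 (s - d n) - s\<bar>"
        using s \<open>0 \<le> d n\<close> by (intro lipschitz) auto
      also have "\<dots> \<le> L * d n"
        using s \<open>0 \<le> L\<close> \<open>0 \<le> d n\<close> by (intro mult_left_mono) auto
      moreover have "\<bar>F n s - U s\<bar> < e / 2"
        using elim(1) s by (simp add: dist_real_def)
      ultimately show "dist (F n (max 0 (s - d n))) (U s) < e"
        using elim(2) unfolding dist_real_def by linarith
    qed
  qed
qed

lemma uniform_limit_linear_param:
  fixes a :: real
  shows "uniform_limit {0..1} (\<lambda>b t. b * t) (\<lambda>t. a * t) (at a)"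
proof (rule uniform_limitI)
  fix e :: real assume "0 < e"
  have "\<bar>b * t - a * t\<bar> < e" if "dist b a < e" "t \<in> {0..1}" for b t :: real
  proof -
    have "\<bar>b * t - a * t\<bar> = \<bar>b - a\<bar> * t"
      using that by (simp add: abs_mult flip: left_diff_distrib)
    also have "\<dots> \<le> \<bar>b - a\<bar>"
      using that by (simp add: mult_left_le)
    finally show ?thesis
      using that by (simp add: dist_real_def)
  qed
  then show "\<forall>\<^sub>F b in at a. \<forall>t\<in>{0..1}. dist (b * t) (a * t) < e"
    unfolding eventually_at using \<open>0 < e\<close> by (auto simp: dist_real_def)
qed

locale bounded_nonlinearity =
  fixes K :: "real \<Rightarrow> real \<Rightarrow> real" and Kmax :: real
  assumes uniformly_continuous: "uniformly_continuous_on ({0..1} \<times> UNIV) (\<lambda>(t, x). K t x)"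
    and nonneg: "\<And>t x. t \<in> {0..1} \<Longrightarrow> 0 \<le> K t x"
    and bounded: "\<And>t x. t \<in> {0..1} \<Longrightarrow> K t x \<le> Kmax"
    and zero: "\<And>t. t \<in> {0..1} \<Longrightarrow> K t 0 = 0"
begin

lemma Kmax_nonneg: "0 \<le> Kmax"
  using nonneg[of 0 0] bounded[of 0 0] by simp

lemma continuous_on_superposition:
  assumes "continuous_on {0..1} w"
  shows "continuous_on {0..1} (\<lambda>s. K s (w s))"
proof -
  have "continuous_on ({0..1} \<times> UNIV) (\<lambda>(t, x). K t x)"
    by (rule uniformly_continuous_imp_continuous[OF uniformly_continuous])
  from continuous_on_compose2[OF this continuous_on_Pair[OF continuous_on_id assms]]
  show ?thesis by auto
qed

lemma uniform_limit_superposition: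
  assumes "uniform_limit {0..1} W w F"
  shows "uniform_limit {0..1} (\<lambda>n s. K s (W n s)) (\<lambda>s. K s (w s)) F"
proof -
  have "uniform_limit {0..1} (\<lambda>n s. (s, W n s)) (\<lambda>s. (s, w s)) F"
    by (rule metric_uniform_limit_imp_uniform_limit[OF assms]) (simp add: dist_Pair_Pair)
  from uniform_limit_compose[OF this uniformly_continuous] show ?thesis
    by (simp add: o_def image_subset_iff)
qed

lemma volterra_profile_superposition:
  assumes "continuous_on {0..1} w" "0 \<le> lam"
    and "\<And>t. t \<in> {0..1} \<Longrightarrow> u t = a * t - lam * volterra (\<lambda>s. K s (w s)) t"
  shows "volterra_profile (\<lambda>s. K s (w s)) u a lam Kmax"
  using assms by unfold_locales (auto intro: continuous_on_superposition nonneg bounded)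

lemma delayed_profiles_limit:
  assumes profile: "\<And>n. volterra_profile (\<lambda>s. K s (F n (max 0 (s - d n)))) (F n) (a n) lam Kmax"
    and lipschitz: "\<And>n x y. x \<in> {0..1} \<Longrightarrow> y \<in> {0..1} \<Longrightarrow> \<bar>F n x - F n y\<bar> \<le> L * \<bar>x - y\<bar>"
    and "0 \<le> L" "\<And>n. 0 \<le> d n" "d \<longlonglongrightarrow> 0"
    and lim: "uniform_limit {0..1} F U sequentially" "a \<longlonglongrightarrow> A"
    and "continuous_on {0..1} U" "0 \<le> lam"
  shows "volterra_profile (\<lambda>s. K s (U s)) U A lam Kmax"
proof -
  from uniform_limit_delayed[OF lipschitz assms(3-6)]
  have "uniform_limit {0..1} (\<lambda>n s. F n (max 0 (s - d n))) U sequentially" .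
  from uniform_limit_volterra[OF uniform_limit_superposition[OF this]]
  have sources: "uniform_limit {0..1} (\<lambda>n. volterra (\<lambda>s. K s (F n (max 0 (s - d n)))))
      (volterra (\<lambda>s. K s (U s))) sequentially"
    using volterra_profile.source_continuous[OF profile] continuous_on_superposition[OF \<open>continuous_on {0..1} U\<close>]
    by simp
  show ?thesis
  proof (rule volterra_profile_superposition[OF \<open>continuous_on {0..1} U\<close> \<open>0 \<le> lam\<close>])
    fix t :: real assume t: "t \<in> {0..1}"
    show "U t = A * t - lam * volterra (\<lambda>s. K s (U s)) t"
    proof (rule LIMSEQ_unique)
      show "(\<lambda>n. F n t) \<longlonglongrightarrow> U t"
        by (rule tendsto_uniform_limitI[OF lim(1) t])
      have "(\<lambda>n. a n * t - lam * volterra (\<lambda>s. K s (F n (max 0 (s - d n)))) t)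
          \<longlonglongrightarrow> A * t - lam * volterra (\<lambda>s. K s (U s)) t"
        by (intro tendsto_intros lim(2) tendsto_uniform_limitI[OF sources t])
      then show "(\<lambda>n. F n t) \<longlonglongrightarrow> A * t - lam * volterra (\<lambda>s. K s (U s)) t"
        using volterra_profile.profile_eq[OF profile t] by simp
    qed
  qed
qed

lemma delayed_profiles_convergent_subseq:
  assumes profile: "\<And>n. volterra_profile (\<lambda>s. K s (F n (max 0 (s - d n)))) (F n) (a n) lam Kmax"
    and slopes: "\<And>n. a n \<in> {a0..R}" and "0 \<le> a0"
    and "\<And>n. 0 \<le> d n" "d \<longlonglongrightarrow> 0" "\<And>n. F n 1 = 0" "0 \<le> lam"
  obtains A U where "A \<in> {a0..R}" "U 1 = 0" "volterra_profile (\<lambda>s. K s (U s)) U A lam Kmax"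
proof -
  define L where "L = R + lam * Kmax"
  have "0 \<le> L"
    using slopes[of 0] \<open>0 \<le> a0\<close> \<open>0 \<le> lam\<close> Kmax_nonneg unfolding L_def by simp
  have L_ge: "\<bar>a n\<bar> + lam * Kmax \<le> L" for n
    using slopes[of n] \<open>0 \<le> a0\<close> unfolding L_def by auto
  have lipschitz: "\<bar>F n x - F n y\<bar> \<le> L * \<bar>x - y\<bar>" if "x \<in> {0..1}" "y \<in> {0..1}" for n x y
    using order_trans[OF volterra_profile.profile_lipschitz[OF profile[of n] that]
        mult_right_mono[OF L_ge[of n] abs_ge_zero]] .
  have bounded: "\<bar>F n x\<bar> \<le> L" if "x \<in> {0..1}" for n x
    using volterra_profile.abs_profile_le[OF profile[of n] that] L_ge[of n] by linarith
  obtain A r' where "A \<in> {a0..R}" "strict_mono r'" and "(a \<circ> r') \<longlonglongrightarrow> A"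
    using seq_compactE[OF compact_imp_seq_compact[OF compact_Icc]] slopes by metis
  obtain U r where U: "continuous_on {0..1} U" and "strict_mono r"
    and lim: "uniform_limit {0..1} (F \<circ> r' \<circ> r) U sequentially"
    by (rule lipschitz_sequence_uniform_limit_subseq[of "F \<circ> r'" L L]) (use bounded lipschitz in auto)
  define \<sigma> where "\<sigma> = r' \<circ> r"
  have "volterra_profile (\<lambda>s. K s (U s)) U A lam Kmax"
  proof (rule delayed_profiles_limit[where F = "F \<circ> \<sigma>" and d = "d \<circ> \<sigma>" and a = "a \<circ> \<sigma>"])
    show "(d \<circ> \<sigma>) \<longlonglongrightarrow> 0"
      unfolding \<sigma>_def using \<open>d \<longlonglongrightarrow> 0\<close> \<open>strict_mono r'\<close> \<open>strict_mono r\<close>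
      by (intro LIMSEQ_subseq_LIMSEQ strict_mono_o)
    show "(a \<circ> \<sigma>) \<longlonglongrightarrow> A"
      using LIMSEQ_subseq_LIMSEQ[OF \<open>(a \<circ> r') \<longlonglongrightarrow> A\<close> \<open>strict_mono r\<close>] by (simp add: \<sigma>_def o_assoc)
    show "uniform_limit {0..1} (F \<circ> \<sigma>) U sequentially"
      using lim by (simp add: \<sigma>_def o_assoc)
  qed (use profile lipschitz \<open>0 \<le> L\<close> U \<open>0 \<le> lam\<close> assms(4) in auto)
  moreover have "U 1 = 0"
    using LIMSEQ_unique[OF tendsto_uniform_limitI[OF lim, of 1]] \<open>\<And>n. F n 1 = 0\<close> by simp
  ultimately show ?thesis
    using that \<open>A \<in> {a0..R}\<close> by blast
qed

end

locale delayed_problem = bounded_nonlinearity +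
  fixes lam :: real
  assumes lam_pos: "0 < lam"
begin

text \<open>Method of steps for the retarded equation
  \<open>u t = a * t - lam * volterra (\<lambda>s. K s (u (max 0 (s - d)))) t\<close>: the \<open>k\<close>-th iterate
  solves it on \<open>[0, k * d]\<close>. Unlike the undelayed initial value problem, which need not
  have unique solutions, this depends continuously on the initial slope \<open>a\<close>.\<close>

fun delay_iter :: "real \<Rightarrow> real \<Rightarrow> nat \<Rightarrow> real \<Rightarrow> real" where
  "delay_iter d a 0 = (\<lambda>t. a * t)"
| "delay_iter d a (Suc k) =
     (\<lambda>t. a * t - lam * volterra (\<lambda>s. K s (delay_iter d a k (max 0 (s - d)))) t)"

lemma continuous_on_delay_iter:
  assumes "0 \<le> d"
  shows "continuous_on {0..1} (delay_iter d a k)"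
proof (induction k)
  case (Suc k)
  then show ?case
    using assms
    by (auto intro!: continuous_intros continuous_on_volterra continuous_on_superposition
        continuous_on_delayed)
qed (auto intro!: continuous_intros)

lemma delay_iter_Suc_eq:
  assumes "0 < d" "t \<in> {0..1}" "t \<le> real (Suc k) * d"
  shows "delay_iter d a (Suc k) t = delay_iter d a k t"
  using assms(2,3)
proof (induction k arbitrary: t)
  case 0
  then have "volterra (\<lambda>s. K s (a * max 0 (s - d))) t = volterra (\<lambda>_. 0) t"
    by (intro volterra_cong) (auto simp: zero)
  then show ?case
    by (simp add: volterra_def)
next
  case (Suc k)
  have "volterra (\<lambda>s. K s (delay_iter d a (Suc k) (max 0 (s - d)))) t =
        volterra (\<lambda>s. K s (delay_iter d a k (max 0 (s - d)))) t"
    using Suc assms(1) by (intro volterra_cong arg_cong[where f = "K _"] Suc.IH) (auto simp: algebra_simps)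
  then show ?case
    by simp
qed

lemma volterra_profile_delay_iter:
  assumes "0 < d" "1 \<le> real n * d"
  shows "volterra_profile (\<lambda>s. K s (delay_iter d a n (max 0 (s - d)))) (delay_iter d a n) a lam Kmax"
proof (rule volterra_profile_superposition)
  show "continuous_on {0..1} (\<lambda>s. delay_iter d a n (max 0 (s - d)))"
    using assms by (intro continuous_on_delayed continuous_on_delay_iter) auto
  fix t :: real assume "t \<in> {0..1}"
  then have "delay_iter d a (Suc n) t = delay_iter d a n t"
    using assms by (intro delay_iter_Suc_eq) (auto simp: algebra_simps)
  then show "delay_iter d a n t = a * t - lam * volterra (\<lambda>s. K s (delay_iter d a n (max 0 (s - d)))) t"
    by simp
qed (use lam_pos in simp)

lemma uniform_limit_delay_iter:
  assumes "0 \<le> d"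
  shows "uniform_limit {0..1} (\<lambda>b. delay_iter d b k) (delay_iter d a k) (at a)"
proof (induction k)
  case 0
  then show ?case
    using uniform_limit_linear_param by simp
next
  case (Suc k)
  have "(\<lambda>s. max 0 (s - d)) \<in> {0..1} \<rightarrow> {0..1}"
    using assms by auto
  from uniform_limit_superposition[OF uniform_limit_compose'[OF Suc this]]
  have "uniform_limit {0..1} (\<lambda>b. volterra (\<lambda>s. K s (delay_iter d b k (max 0 (s - d)))))
      (volterra (\<lambda>s. K s (delay_iter d a k (max 0 (s - d))))) (at a)"
    using assms
    by (intro uniform_limit_volterra always_eventually allI continuous_on_superposition
        continuous_on_delayed continuous_on_delay_iter)
  then show ?case
    by (simp add: uniform_limit_linear_param uniform_limit_intros)
qed

lemma continuous_on_delay_iter_param: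
  assumes "0 \<le> d" "t \<in> {0..1}"
  shows "continuous_on S (\<lambda>a. delay_iter d a k t)"
  using tendsto_uniform_limitI[OF uniform_limit_delay_iter[OF assms(1)] assms(2)]
  by (intro continuous_at_imp_continuous_on) (auto simp: isCont_def)

lemma shooting_delay_iter:
  assumes "lam * Kmax < R" "0 < a0" "a0 < \<delta>" "a0 \<le> R" "64 < lam * \<mu>"
    and growth: "\<And>t x. t \<in> {1/2..3/4} \<Longrightarrow> 0 < x \<Longrightarrow> x < \<delta> \<Longrightarrow> \<mu> * x \<le> K t x"
    and "0 < d" "d \<le> 1/4" "1 \<le> real n * d"
  shows "\<exists>a\<in>{a0..R}. delay_iter d a n 1 = 0"
proof -
  interpret low: volterra_profile "\<lambda>s. K s (delay_iter d a0 n (max 0 (s - d)))" "delay_iter d a0 n" a0 lam Kmax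
    using assms by (intro volterra_profile_delay_iter)
  interpret high: volterra_profile "\<lambda>s. K s (delay_iter d R n (max 0 (s - d)))" "delay_iter d R n" R lam Kmax
    using assms by (intro volterra_profile_delay_iter)
  have "delay_iter d a0 n 1 < 0"
    using assms by (intro low.profile_endpoint_neg[where \<delta> = \<delta> and d = d and \<mu> = \<mu>]) auto
  moreover have "0 < delay_iter d R n 1"
    using high.profile_1_ge \<open>lam * Kmax < R\<close> by simp
  ultimately have "\<exists>a. a0 \<le> a \<and> a \<le> R \<and> delay_iter d a n 1 = 0"
    using assms by (intro IVT' continuous_on_delay_iter_param) auto
  then show ?thesis
    by auto
qed

lemma exists_positive_profile:
  assumes "0 < R" "lam * Kmax < R"
    and superlinear: "\<And>\<mu>. \<exists>\<delta>>0. \<forall>t\<in>{1/2..3/4}. \<forall>x. 0 < x \<and> x < \<delta> \<longrightarrow> \<mu> * x \<le> K t x"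
  obtains A U where "0 < A" "A \<le> R" "U 1 = 0" "volterra_profile (\<lambda>s. K s (U s)) U A lam Kmax"
proof -
  obtain \<delta> where "0 < \<delta>" and growth: "\<forall>t\<in>{1/2..3/4}. \<forall>x. 0 < x \<and> x < \<delta> \<longrightarrow> 65 / lam * x \<le> K t x"
    using superlinear by blast
  define a0 where "a0 = min \<delta> R / 2"
  have a0: "0 < a0" "a0 < \<delta>" "a0 \<le> R"
    using \<open>0 < \<delta>\<close> \<open>0 < R\<close> unfolding a0_def by auto
  define d where "d n = 1 / real (n + 4)" for n
  have d: "0 < d n" "0 \<le> d n" "d n \<le> 1/4" "1 \<le> real (n + 4) * d n" for n
    unfolding d_def by (auto simp: field_simps)
  have "64 < lam * (65 / lam)"
    using lam_pos by simp
  from shooting_delay_iter[OF \<open>lam * Kmax < R\<close> a0 this _ d(1,3,4)] growth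
  have "\<exists>a\<in>{a0..R}. delay_iter (d n) a (n + 4) 1 = 0" for n
    by blast
  then obtain a where slopes: "\<And>n. a n \<in> {a0..R}"
    and endpoint: "\<And>n. delay_iter (d n) (a n) (n + 4) 1 = 0"
    by metis
  define F where "F n = delay_iter (d n) (a n) (n + 4)" for n
  have profile: "volterra_profile (\<lambda>s. K s (F n (max 0 (s - d n)))) (F n) (a n) lam Kmax" for n
    unfolding F_def using d by (intro volterra_profile_delay_iter)
  have "d \<longlonglongrightarrow> 0"
    unfolding d_def using LIMSEQ_ignore_initial_segment[OF lim_1_over_n, of 4] by simp
  moreover have "0 \<le> a0" "0 \<le> lam"
    using a0 lam_pos by auto
  ultimately obtain A U where A: "A \<in> {a0..R}"
    and U: "U 1 = 0" "volterra_profile (\<lambda>s. K s (U s)) U A lam Kmax"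
    using delayed_profiles_convergent_subseq[where d = d, OF profile slopes _ d(2) _ endpoint[folded F_def]]
    by metis
  show ?thesis
    using a0 A by (intro that[OF _ _ U]) auto
qed

end

section \<open>The annulus problem\<close>

definition annulus_radius :: "nat \<Rightarrow> real \<Rightarrow> real \<Rightarrow> real \<Rightarrow> real" where
  "annulus_radius N r1 r2 t =
     (if N = 2 then r2 * (r1 / r2) powr t
      else (let A = (r1 * r2) ^ (N - 2) / (r2 ^ (N - 2) - r1 ^ (N - 2));
                B = r2 ^ (N - 2) / (r2 ^ (N - 2) - r1 ^ (N - 2))
            in (A / (B - t)) powr (1 / (real N - 2))))"

lemma ffun_eq_annulus_radius: "ffun N r1 r2 h t u = h (annulus_radius N r1 r2 t) u"
  by (simp add: ffun_def annulus_radius_def Let_def)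

lemma annulus_radius_qfun_dim2:
  assumes "0 < r1" "r1 < r2"
  shows "continuous_on {0..1} (annulus_radius 2 r1 r2)"
    and "\<And>t. t \<in> {0..1} \<Longrightarrow> annulus_radius 2 r1 r2 t \<in> {r1..r2}"
    and "continuous_on {0..1} (qfun 2 r1 r2)"
    and "\<And>t. t \<in> {0..1} \<Longrightarrow> 0 < qfun 2 r1 r2 t"
proof -
  have radius: "annulus_radius 2 r1 r2 = (\<lambda>t. r2 * (r1 / r2) powr t)"
    by (simp add: annulus_radius_def fun_eq_iff)
  have q: "qfun 2 r1 r2 = (\<lambda>t. (r2 * (r1 / r2) powr t * ln (r2 / r1))\<^sup>2)"
    by (simp add: qfun_def fun_eq_iff)
  have ratio: "0 < r1 / r2" "r1 / r2 \<le> 1"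
    using assms by auto
  show "continuous_on {0..1} (annulus_radius 2 r1 r2)" "continuous_on {0..1} (qfun 2 r1 r2)"
    unfolding radius q using ratio by (auto intro!: continuous_intros)
  fix t :: real assume t: "t \<in> {0..1}"
  have "(r1 / r2) powr 1 \<le> (r1 / r2) powr t" "(r1 / r2) powr t \<le> 1"
    using ratio t by (intro powr_mono' powr_le1; simp)+
  then have "r1 / r2 \<le> (r1 / r2) powr t" "(r1 / r2) powr t \<le> 1"
    using assms by auto
  then have "r2 * (r1 / r2) \<le> r2 * (r1 / r2) powr t" "r2 * (r1 / r2) powr t \<le> r2 * 1"
    using assms by (intro mult_left_mono; simp)+
  then show "annulus_radius 2 r1 r2 t \<in> {r1..r2}"
    unfolding radius using assms by simp
  show "0 < qfun 2 r1 r2 t"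
    unfolding q using assms by simp
qed

lemma annulus_ratio_bounds:
  fixes r1 r2 t :: real
  assumes "0 < r1" "r1 < r2" "0 < m" "t \<in> {0..1}"
  defines "D \<equiv> r2 ^ m - r1 ^ m"
  shows "0 < r2 ^ m / D - t"
    and "r1 ^ m \<le> ((r1 * r2) ^ m / D) / (r2 ^ m / D - t)"
    and "((r1 * r2) ^ m / D) / (r2 ^ m / D - t) \<le> r2 ^ m"
proof -
  have "0 < D"
    unfolding D_def using assms by (simp add: power_strict_mono)
  define E where "E = r2 ^ m - t * D"
  have "t * D \<le> D"
    using assms(4) \<open>0 < D\<close> by (simp add: mult_left_le_one_le)
  then have E_lower: "r1 ^ m \<le> E"
    unfolding E_def D_def by simp
  have E_upper: "E \<le> r2 ^ m"
    unfolding E_def using assms(4) \<open>0 < D\<close> by simp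
  have E_pos: "0 < E"
    using E_lower zero_less_power[OF assms(1), of m] by linarith
  have E_eq: "r2 ^ m / D - t = E / D"
    unfolding E_def using \<open>0 < D\<close> by (simp add: field_simps)
  then have ratio: "((r1 * r2) ^ m / D) / (r2 ^ m / D - t) = (r1 * r2) ^ m / E"
    using \<open>0 < D\<close> by simp
  show "0 < r2 ^ m / D - t"
    unfolding E_eq using E_pos \<open>0 < D\<close> by simp
  have "(r1 * r2) ^ m / r2 ^ m \<le> (r1 * r2) ^ m / E" "(r1 * r2) ^ m / E \<le> (r1 * r2) ^ m / r1 ^ m"
    using E_lower E_upper E_pos assms(1,2) by (intro divide_left_mono mult_pos_pos; simp)+
  then show "r1 ^ m \<le> ((r1 * r2) ^ m / D) / (r2 ^ m / D - t)"
    and "((r1 * r2) ^ m / D) / (r2 ^ m / D - t) \<le> r2 ^ m"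
    unfolding ratio using assms(1,2) by (simp_all add: power_mult_distrib)
qed

lemma annulus_radius_qfun_dim_ge3:
  assumes "0 < r1" "r1 < r2" "3 \<le> N"
  shows "continuous_on {0..1} (annulus_radius N r1 r2)"
    and "\<And>t. t \<in> {0..1} \<Longrightarrow> annulus_radius N r1 r2 t \<in> {r1..r2}"
    and "continuous_on {0..1} (qfun N r1 r2)"
    and "\<And>t. t \<in> {0..1} \<Longrightarrow> 0 < qfun N r1 r2 t"
proof -
  define m where "m = N - 2"
  have "0 < m" "real N - 2 = real m"
    using assms unfolding m_def by auto
  define A where "A = (r1 * r2) ^ m / (r2 ^ m - r1 ^ m)"
  define B where "B = r2 ^ m / (r2 ^ m - r1 ^ m)"
  note bounds = annulus_ratio_bounds[OF assms(1,2) \<open>0 < m\<close>, folded A_def B_def]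
  have "r1 ^ m < r2 ^ m"
    using assms \<open>0 < m\<close> by (simp add: power_strict_mono)
  then have "0 < A"
    unfolding A_def using assms by simp
  have radius: "annulus_radius N r1 r2 = (\<lambda>t. (A / (B - t)) powr (1 / real m))"
    using assms \<open>real N - 2 = real m\<close>
    unfolding annulus_radius_def A_def B_def m_def by (simp add: fun_eq_iff Let_def)
  have q: "qfun N r1 r2 = (\<lambda>t. 1 / (real m)\<^sup>2 * A powr (2 / real m) / (B - t) powr (2 * (real N - 1) / real m))"
    using assms \<open>real N - 2 = real m\<close>
    unfolding qfun_def A_def B_def m_def by (simp add: fun_eq_iff Let_def)
  show "continuous_on {0..1} (annulus_radius N r1 r2)" "continuous_on {0..1} (qfun N r1 r2)"
    unfolding radius q using bounds(1) \<open>0 < A\<close> \<open>0 < m\<close>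
    by (auto intro!: continuous_intros simp: less_imp_neq[symmetric])
  fix t :: real assume t: "t \<in> {0..1}"
  show "0 < qfun N r1 r2 t"
    unfolding q using bounds(1)[OF t] \<open>0 < A\<close> \<open>0 < m\<close> by simp
  have "root m (r1 ^ m) \<le> root m (A / (B - t))" "root m (A / (B - t)) \<le> root m (r2 ^ m)"
    using bounds(2,3)[OF t] \<open>0 < m\<close> by (auto intro: real_root_le_mono)
  moreover have "(A / (B - t)) powr (1 / real m) = root m (A / (B - t))"
    using \<open>0 < m\<close> \<open>0 < A\<close> bounds(1)[OF t] by (simp add: root_powr_inverse)
  ultimately show "annulus_radius N r1 r2 t \<in> {r1..r2}"
    unfolding radius using \<open>0 < m\<close> assms by (simp add: real_root_pos2)
qed

lemma annulus_radius_qfun: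
  assumes "0 < r1" "r1 < r2" "2 \<le> N"
  shows "continuous_on {0..1} (annulus_radius N r1 r2)"
    and "\<And>t. t \<in> {0..1} \<Longrightarrow> annulus_radius N r1 r2 t \<in> {r1..r2}"
    and "continuous_on {0..1} (qfun N r1 r2)"
    and "\<And>t. t \<in> {0..1} \<Longrightarrow> 0 < qfun N r1 r2 t"
  using annulus_radius_qfun_dim2[OF assms(1,2)] annulus_radius_qfun_dim_ge3[OF assms(1,2)] assms(3)
  by (cases "N = 2"; simp)+

lemma truncated_source_superlinear:
  assumes "0 < r1" "r1 < r2" "2 \<le> N" "0 < R"
    and h_nonneg: "\<And>r u. r \<in> {r1..r2} \<Longrightarrow> u \<ge> 0 \<Longrightarrow> h r u \<ge> 0"
    and superlinear: "\<forall>M. \<exists>\<delta>>0. \<forall>t\<in>{0<..<1}. \<forall>u. 0 < u \<and> u < \<delta> \<longrightarrow> ffun N r1 r2 h t u / u \<ge> M"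
  shows "\<exists>\<delta>>0. \<forall>t\<in>{1/2..3/4}. \<forall>x. 0 < x \<and> x < \<delta> \<longrightarrow>
           \<mu> * x \<le> qfun N r1 r2 t * ffun N r1 r2 h t (min (max x 0) R)"
proof -
  note annulus = annulus_radius_qfun[OF assms(1-3)]
  obtain t0 where "t0 \<in> {0..1}" and t0: "\<And>t. t \<in> {0..1} \<Longrightarrow> qfun N r1 r2 t0 \<le> qfun N r1 r2 t"
    using continuous_attains_inf[OF compact_Icc _ annulus(3)] by auto
  define qmin where "qmin = qfun N r1 r2 t0"
  have "0 < qmin"
    unfolding qmin_def using annulus(4) \<open>t0 \<in> {0..1}\<close> by simp
  obtain \<delta> where "0 < \<delta>"
    and \<delta>: "\<forall>t\<in>{0<..<1}. \<forall>u. 0 < u \<and> u < \<delta> \<longrightarrow> \<mu> / qmin \<le> ffun N r1 r2 h t u / u"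
    using superlinear by blast
  have "\<mu> * x \<le> qfun N r1 r2 t * ffun N r1 r2 h t (min (max x 0) R)"
    if t: "t \<in> {1/2..3/4}" and x: "0 < x" "x < min \<delta> R" for t x
  proof -
    have "\<mu> / qmin * x \<le> ffun N r1 r2 h t x"
      using \<delta> t x by (auto simp: pos_le_divide_eq)
    then have "\<mu> * x \<le> qmin * ffun N r1 r2 h t x"
      using \<open>0 < qmin\<close> by (simp add: field_simps)
    also have "\<dots> \<le> qfun N r1 r2 t * ffun N r1 r2 h t x"
      using t x t0[of t] annulus(2)[of t] h_nonneg unfolding qmin_def
      by (intro mult_right_mono) (auto simp: ffun_eq_annulus_radius)
    finally show ?thesis
      using x by simp
  qed
  then show ?thesis
    using \<open>0 < \<delta>\<close> \<open>0 < R\<close> by (intro exI[of _ "min \<delta> R"]) auto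
qed

lemma uniformly_continuous_on_clamp_snd:
  fixes R :: real
  shows "uniformly_continuous_on A (\<lambda>(t::real, x). (t, min (max x 0) R))"
proof (rule lipschitz_on_uniformly_continuous[OF lipschitz_onI[where L = 1]])
  fix z z' :: "real \<times> real"
  obtain t x t' x' where z: "z = (t, x)" "z' = (t', x')"
    by fastforce
  have "\<bar>min (max x 0) R - min (max x' 0) R\<bar> \<le> \<bar>x - x'\<bar>"
    by (auto simp: min_def max_def)
  then have "(min (max x 0) R - min (max x' 0) R)\<^sup>2 \<le> (x - x')\<^sup>2"
    by (simp add: abs_le_square_iff)
  then show "dist ((\<lambda>(t, x). (t, min (max x 0) R)) z) ((\<lambda>(t, x). (t, min (max x 0) R)) z') \<le> 1 * dist z z'"
    unfolding z by (simp add: dist_Pair_Pair dist_real_def)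
qed simp

lemma bounded_nonlinearity_clamp:
  fixes P :: "real \<times> real \<Rightarrow> real"
  assumes cont: "continuous_on ({0..1} \<times> {0..R}) P" and "0 \<le> R"
    and nonneg: "\<And>z. z \<in> {0..1} \<times> {0..R} \<Longrightarrow> 0 \<le> P z"
    and zero: "\<And>t. t \<in> {0..1} \<Longrightarrow> P (t, 0) = 0"
  shows "\<exists>Kmax. bounded_nonlinearity (\<lambda>t x. P (t, min (max x 0) R)) Kmax"
proof -
  let ?S = "{0..1::real} \<times> {0..R}" and ?clamp = "\<lambda>(t::real, x). (t, min (max x 0) R)"
  have "compact ?S"
    by (intro compact_Times compact_Icc)
  then have "uniformly_continuous_on ?S P" and "bounded (P ` ?S)"
    using cont by (auto intro: compact_uniformly_continuous compact_imp_bounded compact_continuous_image)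
  then obtain Kmax where Kmax: "\<And>z. z \<in> ?S \<Longrightarrow> \<bar>P z\<bar> \<le> Kmax"
    unfolding bounded_iff by auto
  have clamp: "?clamp z \<in> ?S" if "z \<in> {0..1} \<times> UNIV" for z
    using that \<open>0 \<le> R\<close> by auto
  then have "?clamp ` ({0..1} \<times> UNIV) \<subseteq> ?S"
    by blast
  then have P_clamp: "uniformly_continuous_on (?clamp ` ({0..1} \<times> UNIV)) P"
    using \<open>uniformly_continuous_on ?S P\<close>
    unfolding uniformly_continuous_on_def by (meson subsetD)
  have "bounded_nonlinearity (\<lambda>t x. P (?clamp (t, x))) Kmax"
  proof
    show "uniformly_continuous_on ({0..1} \<times> UNIV) (\<lambda>(t, x). P (?clamp (t, x)))"
      using uniformly_continuous_on_compose[OF uniformly_continuous_on_clamp_snd P_clamp]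
      by (simp add: case_prod_beta')
    fix t x :: real assume "t \<in> {0..1}"
    then have "?clamp (t, x) \<in> ?S"
      by (intro clamp) auto
    then show "0 \<le> P (?clamp (t, x))" "P (?clamp (t, x)) \<le> Kmax"
      using nonneg Kmax by force+
    show "P (?clamp (t, 0)) = 0"
      using zero \<open>t \<in> {0..1}\<close> \<open>0 \<le> R\<close> by simp
  qed
  then show ?thesis
    by auto
qed

lemma continuous_on_annulus_source:
  assumes "0 < r1" "r1 < r2" "2 \<le> N"
    and h_cont: "continuous_on ({r1..r2} \<times> {0..}) (\<lambda>(r, u). h r u)"
  shows "continuous_on ({0..1} \<times> {0..R}) (\<lambda>(t, x). qfun N r1 r2 t * ffun N r1 r2 h t x)"
proof -
  note annulus = annulus_radius_qfun[OF assms(1-3)]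
  let ?S = "{0..1::real} \<times> {0..R::real}"
  have radius_cont: "continuous_on ?S (\<lambda>z. (annulus_radius N r1 r2 (fst z), snd z))"
    by (auto intro!: continuous_intros continuous_on_compose2[OF annulus(1)])
  have radius_range: "(\<lambda>z. (annulus_radius N r1 r2 (fst z), snd z)) ` ?S \<subseteq> {r1..r2} \<times> {0..}"
    using annulus(2) by auto
  from continuous_on_compose2[OF h_cont radius_cont radius_range]
  have "continuous_on ?S (\<lambda>z. h (annulus_radius N r1 r2 (fst z)) (snd z))"
    by simp
  then show ?thesis
    unfolding case_prod_beta ffun_eq_annulus_radius
    by (auto intro!: continuous_intros continuous_on_compose2[OF annulus(3)])
qed

lemma bounded_nonlinearity_truncation:
  assumes "0 < r1" "r1 < r2" "2 \<le> N" "0 < R"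
    and h_cont: "continuous_on ({r1..r2} \<times> {0..}) (\<lambda>(r, u). h r u)"
    and h_nonneg: "\<And>r u. r \<in> {r1..r2} \<Longrightarrow> u \<ge> 0 \<Longrightarrow> h r u \<ge> 0"
    and h_zero: "\<And>r. r \<in> {r1..r2} \<Longrightarrow> h r 0 = 0"
  obtains Kmax
  where "bounded_nonlinearity (\<lambda>t x. qfun N r1 r2 t * ffun N r1 r2 h t (min (max x 0) R)) Kmax"
proof -
  note annulus = annulus_radius_qfun[OF assms(1-3)]
  have "0 \<le> qfun N r1 r2 t * ffun N r1 r2 h t x" if "t \<in> {0..1}" "x \<in> {0..R}" for t x
    using that annulus(2,4)[OF that(1)] h_nonneg by (simp add: ffun_eq_annulus_radius less_imp_le)
  moreover have "qfun N r1 r2 t * ffun N r1 r2 h t 0 = 0" if "t \<in> {0..1}" for t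
    using annulus(2)[OF that] h_zero by (simp add: ffun_eq_annulus_radius)
  ultimately show ?thesis
    using bounded_nonlinearity_clamp[OF continuous_on_annulus_source[OF assms(1-3) h_cont]] \<open>0 < R\<close> that
    by force
qed

lemma (in delayed_problem) positive_solution_of_truncation:
  assumes "0 < R" "lam * Kmax < R"
    and K_eq: "\<And>t x. K t x = qfun N r1 r2 t * ffun N r1 r2 h t (min (max x 0) R)"
    and superlinear: "\<And>\<mu>. \<exists>\<delta>>0. \<forall>t\<in>{1/2..3/4}. \<forall>x. 0 < x \<and> x < \<delta> \<longrightarrow> \<mu> * x \<le> K t x"
  shows "\<exists>u. positive_solution N r1 r2 h lam u \<and> (\<forall>t\<in>{0..1}. u t \<le> R)"
proof -
  obtain A U where "0 < A" "A \<le> R" "U 1 = 0" and U: "volterra_profile (\<lambda>s. K s (U s)) U A lam Kmax"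
    by (rule exists_positive_profile[OF assms(1,2) superlinear])
  interpret U: volterra_profile "\<lambda>s. K s (U s)" U A lam Kmax
    by (rule U)
  have U_le: "U t \<le> R" if "t \<in> {0..1}" for t
  proof -
    have "A * t \<le> A"
      using that \<open>0 < A\<close> by (simp add: mult_left_le)
    then show ?thesis
      using U.profile_le[OF that] \<open>A \<le> R\<close> by linarith
  qed
  have "K t (U t) = qfun N r1 r2 t * ffun N r1 r2 h t (U t)" if "t \<in> {0<..<1}" for t
    using that U.profile_pos[OF \<open>0 < A\<close>] \<open>U 1 = 0\<close> U_le[of t] by (simp add: K_eq)
  then have "positive_solution N r1 r2 h lam U"
    by (rule U.positive_solution[OF \<open>0 < A\<close> \<open>U 1 = 0\<close>])
  with U_le show ?thesis
    by blast
qed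

theorem theorem1p2:
  fixes N :: nat and r1 r2 :: real and h :: "real \<Rightarrow> real \<Rightarrow> real"
  assumes "0 < r1" "r1 < r2" "N \<ge> 2"
    and "continuous_on ({r1..r2} \<times> {0..}) (\<lambda>(r, u). h r u)"
    and "\<And>r u. r \<in> {r1..r2} \<Longrightarrow> u \<ge> 0 \<Longrightarrow> h r u \<ge> 0"
    and "\<And>r. r \<in> {r1..r2} \<Longrightarrow> h r 0 = 0"
    and "\<forall>M. \<exists>\<delta>>0. \<forall>t\<in>{0<..<1}. \<forall>u. 0 < u \<and> u < \<delta> \<longrightarrow> ffun N r1 r2 h t u / u \<ge> M"
  shows "\<forall>R>0. \<exists>lamR>0. \<forall>lam. 0 < lam \<and> lam < lamR \<longrightarrow>
           (\<exists>u. positive_solution N r1 r2 h lam u \<and> (\<forall>t\<in>{0..1}. u t \<le> R))"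
proof (intro allI impI)
  fix R :: real assume "0 < R"
  define K where "K t x = qfun N r1 r2 t * ffun N r1 r2 h t (min (max x 0) R)" for t x
  obtain Kmax where K: "bounded_nonlinearity K Kmax"
    unfolding K_def by (rule bounded_nonlinearity_truncation[OF assms(1-3) \<open>0 < R\<close> assms(4-6)])
  have "0 \<le> Kmax"
    by (rule bounded_nonlinearity.Kmax_nonneg[OF K])
  show "\<exists>lamR>0. \<forall>lam. 0 < lam \<and> lam < lamR \<longrightarrow>
          (\<exists>u. positive_solution N r1 r2 h lam u \<and> (\<forall>t\<in>{0..1}. u t \<le> R))"
  proof (intro exI[of _ "R / (Kmax + 1)"] conjI allI impI)
    show "0 < R / (Kmax + 1)"
      using \<open>0 < R\<close> \<open>0 \<le> Kmax\<close> by simp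
    fix lam :: real assume lam: "0 < lam \<and> lam < R / (Kmax + 1)"
    then have "lam * Kmax < R" and "delayed_problem K Kmax lam"
      using \<open>0 \<le> Kmax\<close> K by (simp_all add: field_simps delayed_problem_def delayed_problem_axioms_def)
    moreover have "\<exists>\<delta>>0. \<forall>t\<in>{1/2..3/4}. \<forall>x. 0 < x \<and> x < \<delta> \<longrightarrow> \<mu> * x \<le> K t x" for \<mu>
      unfolding K_def by (rule truncated_source_superlinear[OF assms(1-3) \<open>0 < R\<close> assms(5,7)])
    ultimately show "\<exists>u. positive_solution N r1 r2 h lam u \<and> (\<forall>t\<in>{0..1}. u t \<le> R)"
      using delayed_problem.positive_solution_of_truncation[OF _ \<open>0 < R\<close>, of K Kmax lam]
      by (simp add: K_def)
  qed
qed

end
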